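(* Let $f_j,g_i:\mathbb{R}^n\to\mathbb{R}$ ($j=1,\dots,m$, $i=1,\dots,p$) be continuously differentiable, let $x\in\mathbb{R}^n$, and let $(t,d)$ be the solution of $QP(x)$. Then: (I) $t\le \Phi(x)-\frac12 d^Td$. (II) If $d=0$ and MFCQ holds at $x$, then $x$ is a strongly critical point of the MOP. (III) If $d\neq 0$, then there is $\bar\sigma>0$ such that for every $\sigma\ge\bar\sigma$ and every $j\in\{1,\dots,m\}$ one has $\theta_{j,\sigma}(x;d)<0$, and $d$ is a descent direction of $\Psi_{j,\sigma}$ at $x$ (i.e. there is $\bar\alpha>0$ with $\Psi_{j,\sigma}(x+\alpha d)<\Psi_{j,\sigma}(x)$ for all $\alpha\in(0,\bar\alpha]$).
   Context: The MOP is: minimize $(f_1(x),\dots,f_m(x))$ subject to $g_i(x)\le 0$, $i=1,\dots,p$, with feasible set $X=\{x: g_i(x)\le 0\ \forall i\}$. $\Phi(x)=\max\{0,g_1(x),\dots,g_p(x)\}$; $I(x)=\{i\in\{1,\dots,p\}: g_i(x)=\Phi(x)\}$. $\Phi^*(x;d)=\max\{\max_{i\in I(x)}(g_i(x)+\nabla g_i(x)^Td),\,0\}-\Phi(x)$ (the inner max over an empty set is omitted). For $\sigma>0$: $\Psi_{j,\sigma}(x)=f_j(x)+\sigma\Phi(x)$ and $\theta_{j,\sigma}(x;d)=\nabla f_j(x)^Td+\sigma\Phi^*(x;d)$. $QP(x)$: minimize over $(t,d)\in\mathbb{R}\times\mathbb{R}^n$ the quantity $t+\frac12 d^Td$ subject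 to $\nabla f_j(x)^Td\le t$ ($j=1,\dots,m$) and $g_i(x)+\nabla g_i(x)^Td\le t$ ($i=1,\dots,p$); it has a unique solution. MFCQ holds at $x$ if there is $z\in\mathbb{R}^n$ with $\nabla g_i(x)^Tz<0$ for all $i\in I(x)$. A point $x\in X$ is a strongly critical point of the MOP if there exist $\lambda\in\mathbb{R}^m_+\setminus\{0\}$ and $\mu\in\mathbb{R}^p_+$ with $\sum_j\lambda_j\nabla f_j(x)+\sum_i\mu_i\nabla g_i(x)=0$ and $\mu_ig_i(x)=0$ for all $i$. *)

theory Defs
  imports "HOL-Analysis.Analysis"
begin

text \<open>Constraints g i, i = 1..p, with gradients gg i; objectives f j, j = 1..m, with gradients gf j.\<close>

definition Phi :: "nat \<Rightarrow> (nat \<Rightarrow> real^'n \<Rightarrow> real) \<Rightarrow> real^'n \<Rightarrow> real" where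
  "Phi p g x = Max (insert 0 {g i x | i. i \<in> {1..p}})"

definition actI :: "nat \<Rightarrow> (nat \<Rightarrow> real^'n \<Rightarrow> real) \<Rightarrow> real^'n \<Rightarrow> nat set" where
  "actI p g x = {i \<in> {1..p}. g i x = Phi p g x}"

definition Phi_star ::
  "nat \<Rightarrow> (nat \<Rightarrow> real^'n \<Rightarrow> real) \<Rightarrow> (nat \<Rightarrow> real^'n \<Rightarrow> real^'n) \<Rightarrow> real^'n \<Rightarrow> real^'n \<Rightarrow> real" where
  "Phi_star p g gg x d =
     Max (insert 0 {g i x + gg i x \<bullet> d | i. i \<in> actI p g x}) - Phi p g x"

definition Psi ::
  "(real^'n \<Rightarrow> real) \<Rightarrow> nat \<Rightarrow> (nat \<Rightarrow> real^'n \<Rightarrow> real) \<Rightarrow> real \<Rightarrow> real^'n \<Rightarrow> real" where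
  "Psi fj p g \<sigma> x = fj x + \<sigma> * Phi p g x"

definition theta ::
  "(real^'n \<Rightarrow> real^'n) \<Rightarrow> nat \<Rightarrow> (nat \<Rightarrow> real^'n \<Rightarrow> real) \<Rightarrow> (nat \<Rightarrow> real^'n \<Rightarrow> real^'n)
     \<Rightarrow> real \<Rightarrow> real^'n \<Rightarrow> real^'n \<Rightarrow> real" where
  "theta gfj p g gg \<sigma> x d = gfj x \<bullet> d + \<sigma> * Phi_star p g gg x d"

definition QP_feasible ::
  "nat \<Rightarrow> (nat \<Rightarrow> real^'n \<Rightarrow> real^'n) \<Rightarrow> nat \<Rightarrow> (nat \<Rightarrow> real^'n \<Rightarrow> real) \<Rightarrow> (nat \<Rightarrow> real^'n \<Rightarrow> real^'n)
     \<Rightarrow> real^'n \<Rightarrow> real \<Rightarrow> real^'n \<Rightarrow> bool" where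
  "QP_feasible m gf p g gg x t d \<longleftrightarrow>
     (\<forall>j\<in>{1..m}. gf j x \<bullet> d \<le> t) \<and> (\<forall>i\<in>{1..p}. g i x + gg i x \<bullet> d \<le> t)"

definition QP_solution ::
  "nat \<Rightarrow> (nat \<Rightarrow> real^'n \<Rightarrow> real^'n) \<Rightarrow> nat \<Rightarrow> (nat \<Rightarrow> real^'n \<Rightarrow> real) \<Rightarrow> (nat \<Rightarrow> real^'n \<Rightarrow> real^'n)
     \<Rightarrow> real^'n \<Rightarrow> real \<Rightarrow> real^'n \<Rightarrow> bool" where
  "QP_solution m gf p g gg x t d \<longleftrightarrow>
     QP_feasible m gf p g gg x t d \<and>
     (\<forall>t' d'. QP_feasible m gf p g gg x t' d' \<longrightarrow> t + (1/2) * (d \<bullet> d) \<le> t' + (1/2) * (d' \<bullet> d'))"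

definition MFCQ ::
  "nat \<Rightarrow> (nat \<Rightarrow> real^'n \<Rightarrow> real) \<Rightarrow> (nat \<Rightarrow> real^'n \<Rightarrow> real^'n) \<Rightarrow> real^'n \<Rightarrow> bool" where
  "MFCQ p g gg x \<longleftrightarrow> (\<exists>z. \<forall>i\<in>actI p g x. gg i x \<bullet> z < 0)"

definition feasible_set :: "nat \<Rightarrow> (nat \<Rightarrow> real^'n \<Rightarrow> real) \<Rightarrow> (real^'n) set" where
  "feasible_set p g = {x. \<forall>i\<in>{1..p}. g i x \<le> 0}"

definition strongly_critical ::
  "nat \<Rightarrow> (nat \<Rightarrow> real^'n \<Rightarrow> real^'n) \<Rightarrow> nat \<Rightarrow> (nat \<Rightarrow> real^'n \<Rightarrow> real) \<Rightarrow> (nat \<Rightarrow> real^'n \<Rightarrow> real^'n)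
     \<Rightarrow> real^'n \<Rightarrow> bool" where
  "strongly_critical m gf p g gg x \<longleftrightarrow>
     x \<in> feasible_set p g \<and>
     (\<exists>lam \<mu> :: nat \<Rightarrow> real.
        (\<forall>j\<in>{1..m}. lam j \<ge> 0) \<and> (\<exists>j\<in>{1..m}. lam j \<noteq> 0) \<and>
        (\<forall>i\<in>{1..p}. \<mu> i \<ge> 0) \<and>
        (\<Sum>j\<in>{1..m}. lam j *\<^sub>R gf j x) + (\<Sum>i\<in>{1..p}. \<mu> i *\<^sub>R gg i x) = 0 \<and>
        (\<forall>i\<in>{1..p}. \<mu> i * g i x = 0))"

end

theory Submission
  imports Defs
begin

text \<open>
  (I) holds because (\<Phi>(x), 0) is feasible for QP(x).
  (II) If d = 0 then t = \<Phi>(x). A vector z decreasing all linearised active constraints (and,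
  when \<Phi>(x) = 0, all objectives too) would make (\<Phi>(x) - \<epsilon>c/2, \<epsilon>z) beat the optimum for small
  \<epsilon> > 0. Under MFCQ this first forces \<Phi>(x) = 0; then, by separation, 0 lies in the convex hull
  of the objective and active constraint gradients, and MFCQ once more prevents the objective
  weights from all vanishing.
  (III) Feasibility of (t, d) gives \<Phi>*(x;d) \<le> max 0 t - \<Phi>(x), hence
  \<theta>(x;d) \<le> t + \<sigma>(max 0 t - \<Phi>(x)), which is negative for large \<sigma> by (I). Since \<theta>(x;d) dominates
  the right directional derivative of \<Psi> at x along d, d is a descent direction.
\<close>

lemma Phi_nonneg: "0 \<le> Phi p g x"
  unfolding Phi_def by (rule Max_ge) auto

lemma Phi_ge: "i \<in> {1..p} \<Longrightarrow> g i x \<le> Phi p g x"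
  unfolding Phi_def by (rule Max_ge) auto

lemma Phi_le: "0 \<le> c \<Longrightarrow> (\<And>i. i \<in> {1..p} \<Longrightarrow> g i x \<le> c) \<Longrightarrow> Phi p g x \<le> c"
  unfolding Phi_def by (subst Max_le_iff) auto

lemma finite_actI: "finite (actI p g x)"
  unfolding actI_def by auto

lemma actI_iff: "i \<in> actI p g x \<longleftrightarrow> i \<in> {1..p} \<and> g i x = Phi p g x"
  unfolding actI_def by simp

lemma Phi_add_Phi_star:
  "Phi p g x + Phi_star p g gg x d = Max (insert 0 {g i x + gg i x \<bullet> d | i. i \<in> actI p g x})"
  unfolding Phi_star_def by simp

lemma Phi_star_le:
  assumes "0 \<le> c" and "\<And>i. i \<in> actI p g x \<Longrightarrow> g i x + gg i x \<bullet> d \<le> c"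
  shows "Phi_star p g gg x d \<le> c - Phi p g x"
proof -
  have "Phi p g x + Phi_star p g gg x d \<le> c"
    unfolding Phi_add_Phi_star using assms finite_actI[of p g x] by (subst Max_le_iff) auto
  then show ?thesis by simp
qed

lemma Phi_add_Phi_star_nonneg: "0 \<le> Phi p g x + Phi_star p g gg x d"
  unfolding Phi_add_Phi_star using finite_actI[of p g x] by (intro Max_ge) auto

lemma Phi_add_Phi_star_ge:
  "i \<in> actI p g x \<Longrightarrow> g i x + gg i x \<bullet> d \<le> Phi p g x + Phi_star p g gg x d"
  unfolding Phi_add_Phi_star using finite_actI[of p g x] by (intro Max_ge) auto

lemma QP_solution_le_Phi:
  assumes "QP_solution m gf p g gg x t d"
  shows "t + (1/2) * (d \<bullet> d) \<le> Phi p g x"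
proof -
  have "QP_feasible m gf p g gg x (Phi p g x) 0"
    unfolding QP_feasible_def using Phi_nonneg[of p g x] Phi_ge[of _ p g x] by auto
  then show ?thesis using assms unfolding QP_solution_def by force
qed

lemma QP_solution_zero_eq_Phi:
  assumes "m \<ge> 1" and sol: "QP_solution m gf p g gg x t 0"
  shows "t = Phi p g x"
proof -
  have feas: "QP_feasible m gf p g gg x t 0"
    using sol unfolding QP_solution_def by auto
  have "0 \<le> t" using feas \<open>m \<ge> 1\<close> unfolding QP_feasible_def by force
  moreover have "\<And>i. i \<in> {1..p} \<Longrightarrow> g i x \<le> t" using feas unfolding QP_feasible_def by auto
  ultimately have "Phi p g x \<le> t" by (rule Phi_le)
  then show ?thesis using QP_solution_le_Phi[OF sol] by simp
qed

lemma finite_neg_uniform_bound: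
  fixes S :: "real set"
  assumes "finite S" and "\<forall>s\<in>S. s < 0"
  shows "\<exists>c>0. \<forall>s\<in>S. s \<le> - c"
proof -
  have "Max (insert (-1) S) \<in> insert (-1) S" using assms by (intro Max_in) auto
  then have "Max (insert (-1) S) < 0" using assms by auto
  moreover have "\<forall>s\<in>S. s \<le> Max (insert (-1) S)" using assms by auto
  ultimately show ?thesis by (intro exI[of _ "- Max (insert (-1) S)"]) auto
qed

lemma eventually_at_right_0_imp_interval:
  assumes "\<forall>\<^sub>F a in at_right (0::real). P a"
  shows "\<exists>b>0. \<forall>a\<in>{0<..b}. P a"
proof -
  obtain b where "b > 0" "\<forall>a>0. a < b \<longrightarrow> P a"
    using assms unfolding eventually_at_right_field by auto
  then show ?thesis by (intro exI[of _ "b / 2"]) auto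
qed

lemma eventually_pos_at_right_0: "\<forall>\<^sub>F a in at_right (0::real). 0 < a"
  by (simp add: eventually_at_filter)

lemma eventually_affine_le_at_right_0:
  fixes a b c P :: real
  assumes "b \<le> P" and "b = P \<Longrightarrow> a \<le> - c" and "0 < c"
  shows "\<forall>\<^sub>F e in at_right 0. b + e * a \<le> P - e * c / 2"
proof (cases "b = P")
  case True
  from eventually_pos_at_right_0 show ?thesis
  proof eventually_elim
    case (elim e)
    have "e * a \<le> e * (- c)" using elim assms(2)[OF True] by (intro mult_left_mono) auto
    moreover have "0 < e * c" using elim \<open>0 < c\<close> by simp
    ultimately show ?case using True by (simp add: algebra_simps)
  qed
next
  case False
  have "((\<lambda>e. b + e * (a + c / 2)) \<longlongrightarrow> b + 0 * (a + c / 2)) (at_right 0)"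
    by (intro tendsto_intros)
  then have "\<forall>\<^sub>F e in at_right 0. b + e * (a + c / 2) < P"
    using order_tendstoD(2) False assms(1) by fastforce
  then show ?thesis by eventually_elim (simp add: algebra_simps)
qed

lemma eventually_QP_feasible_along:
  assumes act: "\<And>i. i \<in> actI p g x \<Longrightarrow> gg i x \<bullet> z \<le> - c"
    and obj: "\<And>j. Phi p g x = 0 \<Longrightarrow> j \<in> {1..m} \<Longrightarrow> gf j x \<bullet> z \<le> - c"
    and "0 < c"
  shows "\<forall>\<^sub>F e in at_right 0. QP_feasible m gf p g gg x (Phi p g x - e * c / 2) (e *\<^sub>R z)"
proof -
  let ?P = "Phi p g x"
  have obj_ev: "\<forall>\<^sub>F e in at_right 0. 0 + e * (gf j x \<bullet> z) \<le> ?P - e * c / 2"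
    if "j \<in> {1..m}" for j
    using that obj \<open>0 < c\<close> by (intro eventually_affine_le_at_right_0 Phi_nonneg) auto
  have con_ev: "\<forall>\<^sub>F e in at_right 0. g i x + e * (gg i x \<bullet> z) \<le> ?P - e * c / 2"
    if "i \<in> {1..p}" for i
    using that act \<open>0 < c\<close> by (intro eventually_affine_le_at_right_0 Phi_ge) (auto simp: actI_iff)
  have "\<forall>\<^sub>F e in at_right 0. \<forall>j\<in>{1..m}. 0 + e * (gf j x \<bullet> z) \<le> ?P - e * c / 2"
    using obj_ev by (intro eventually_ball_finite) auto
  moreover have "\<forall>\<^sub>F e in at_right 0. \<forall>i\<in>{1..p}. g i x + e * (gg i x \<bullet> z) \<le> ?P - e * c / 2"
    using con_ev by (intro eventually_ball_finite) auto
  ultimately show ?thesis by eventually_elim (simp add: QP_feasible_def)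
qed

lemma QP_solution_zero_no_descent_direction:
  assumes "m \<ge> 1" and sol: "QP_solution m gf p g gg x t 0"
    and act: "\<forall>i\<in>actI p g x. gg i x \<bullet> z < 0"
    and obj: "Phi p g x = 0 \<longrightarrow> (\<forall>j\<in>{1..m}. gf j x \<bullet> z < 0)"
  shows False
proof -
  let ?P = "Phi p g x"
  define S where "S = (\<lambda>i. gg i x \<bullet> z) ` actI p g x
    \<union> (if ?P = 0 then (\<lambda>j. gf j x \<bullet> z) ` {1..m} else {})"
  have "finite S" unfolding S_def using finite_actI[of p g x] by auto
  moreover have "\<forall>s\<in>S. s < 0" unfolding S_def using act obj by (auto split: if_splits)
  ultimately obtain c where "c > 0" and c: "\<forall>s\<in>S. s \<le> - c"
    using finite_neg_uniform_bound by blast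
  then have feas: "\<forall>\<^sub>F e in at_right 0. QP_feasible m gf p g gg x (?P - e * c / 2) (e *\<^sub>R z)"
    by (intro eventually_QP_feasible_along) (auto simp: S_def)
  have "((\<lambda>e. e * (z \<bullet> z)) \<longlongrightarrow> 0 * (z \<bullet> z)) (at_right 0)"
    by (intro tendsto_intros)
  then have small: "\<forall>\<^sub>F e in at_right 0. e * (z \<bullet> z) < c"
    using order_tendstoD(2) \<open>c > 0\<close> by fastforce
  obtain e where "0 < e" "e * (z \<bullet> z) < c"
    and "QP_feasible m gf p g gg x (?P - e * c / 2) (e *\<^sub>R z)"
    using eventually_happens'[OF trivial_limit_at_right_real
        eventually_conj[OF eventually_pos_at_right_0 eventually_conj[OF small feas]]]
    by blast
  then have "t \<le> ?P - e * c / 2 + (1/2) * ((e *\<^sub>R z) \<bullet> (e *\<^sub>R z))"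
    using sol unfolding QP_solution_def by force
  then have "e * c \<le> e * (e * (z \<bullet> z))"
    using QP_solution_zero_eq_Phi[OF \<open>m \<ge> 1\<close> sol] by (simp add: algebra_simps)
  moreover have "e * (e * (z \<bullet> z)) < e * c" using \<open>0 < e\<close> \<open>e * (z \<bullet> z) < c\<close> by simp
  ultimately show False by simp
qed

lemma Phi_eq_0_if_QP_solution_zero_MFCQ:
  assumes "m \<ge> 1" and "QP_solution m gf p g gg x t 0" and "MFCQ p g gg x"
  shows "Phi p g x = 0"
  using assms QP_solution_zero_no_descent_direction unfolding MFCQ_def by blast

lemma exists_neg_inner_if_zero_notin_convex_hull:
  fixes W :: "'a::euclidean_space set"
  assumes "finite W" and "0 \<notin> convex hull W"
  shows "\<exists>z. \<forall>w\<in>W. w \<bullet> z < 0"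
proof -
  have "closed (convex hull W)"
    using assms(1) by (intro compact_imp_closed compact_convex_hull finite_imp_compact)
  then obtain a b where "0 < b" and ab: "\<forall>v\<in>convex hull W. a \<bullet> v > b"
    using separating_hyperplane_closed_0[OF convex_convex_hull _ assms(2)] by blast
  have "w \<bullet> (- a) < 0" if "w \<in> W" for w
  proof -
    have "a \<bullet> w > b" using that hull_subset[of W convex] ab by blast
    then show ?thesis using \<open>0 < b\<close> by (simp add: inner_commute)
  qed
  then show ?thesis by blast
qed

lemma convex_hull_image_weights:
  fixes w :: "'b \<Rightarrow> 'a::real_vector"
  assumes fin: "finite K" and y: "y \<in> convex hull (w ` K)"
  shows "\<exists>c. (\<forall>k\<in>K. 0 \<le> c k) \<and> sum c K = 1 \<and> (\<Sum>k\<in>K. c k *\<^sub>R w k) = y"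
proof -
  obtain u where u: "\<forall>v\<in>w ` K. 0 \<le> u v" "sum u (w ` K) = 1" "(\<Sum>v\<in>w ` K. u v *\<^sub>R v) = y"
    using y convex_hull_finite[OF finite_imageI[OF fin], of w] by auto
  \<comment> \<open>Split the weight of each point evenly among the indices representing it.\<close>
  define N where "N v = card {k \<in> K. w k = v}" for v
  define c where "c k = u (w k) / N (w k)" for k
  have N_pos: "N v > 0" if "v \<in> w ` K" for v
    using that fin unfolding N_def by (auto simp: card_gt_0_iff)
  have fibre_sum: "(\<Sum>k\<in>{k \<in> K. w k = v}. c k) = u v" if "v \<in> w ` K" for v
  proof -
    have "(\<Sum>k\<in>{k \<in> K. w k = v}. c k) = (\<Sum>k\<in>{k \<in> K. w k = v}. u v / N v)"
      by (rule sum.cong) (auto simp: c_def)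
    also have "\<dots> = u v" using N_pos[OF that] by (simp add: N_def)
    finally show ?thesis .
  qed
  have fibre_vsum: "(\<Sum>k\<in>{k \<in> K. w k = v}. c k *\<^sub>R w k) = u v *\<^sub>R v" if "v \<in> w ` K" for v
  proof -
    have "(\<Sum>k\<in>{k \<in> K. w k = v}. c k *\<^sub>R w k) = (\<Sum>k\<in>{k \<in> K. w k = v}. c k) *\<^sub>R v"
      by (simp add: scaleR_sum_left)
    then show ?thesis using fibre_sum[OF that] by simp
  qed
  have "sum c K = (\<Sum>v\<in>w ` K. \<Sum>k\<in>{k \<in> K. w k = v}. c k)"
    using sum.image_gen[OF fin, of c w] by simp
  also have "\<dots> = 1" using fibre_sum u(2) by (simp cong: sum.cong)
  finally have "sum c K = 1" .
  moreover have "(\<Sum>k\<in>K. c k *\<^sub>R w k) = (\<Sum>v\<in>w ` K. \<Sum>k\<in>{k \<in> K. w k = v}. c k *\<^sub>R w k)"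
    using sum.image_gen[OF fin, of "\<lambda>k. c k *\<^sub>R w k" w] by simp
  then have "(\<Sum>k\<in>K. c k *\<^sub>R w k) = y" using fibre_vsum u(3) by (simp cong: sum.cong)
  moreover have "\<forall>k\<in>K. 0 \<le> c k" using u(1) N_pos unfolding c_def by auto
  ultimately show ?thesis by blast
qed

lemma convex_hull_Un_image_weights:
  fixes u :: "'b \<Rightarrow> 'a::real_vector" and v :: "'c \<Rightarrow> 'a"
  assumes "finite I" and "finite J" and "y \<in> convex hull (u ` I \<union> v ` J)"
  shows "\<exists>a b. (\<forall>i\<in>I. 0 \<le> a i) \<and> (\<forall>j\<in>J. 0 \<le> b j) \<and> sum a I + sum b J = 1
    \<and> (\<Sum>i\<in>I. a i *\<^sub>R u i) + (\<Sum>j\<in>J. b j *\<^sub>R v j) = y"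
proof -
  define K where "K = Inl ` I \<union> Inr ` J"
  define w where "w = case_sum u v"
  have "finite K" unfolding K_def using assms(1,2) by simp
  moreover have "y \<in> convex hull (w ` K)"
    using assms(3) unfolding K_def w_def by (simp add: image_Un image_image)
  ultimately obtain c where c: "\<forall>k\<in>K. 0 \<le> c k" "sum c K = 1" "(\<Sum>k\<in>K. c k *\<^sub>R w k) = y"
    using convex_hull_image_weights by blast
  have disj: "Inl ` I \<inter> Inr ` J = {}" by auto
  have "sum c K = (\<Sum>i\<in>I. c (Inl i)) + (\<Sum>j\<in>J. c (Inr j))"
    unfolding K_def using assms(1,2) disj by (simp add: sum.union_disjoint sum.reindex)
  moreover have "(\<Sum>k\<in>K. c k *\<^sub>R w k) = (\<Sum>i\<in>I. c (Inl i) *\<^sub>R u i) + (\<Sum>j\<in>J. c (Inr j) *\<^sub>R v j)"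
    unfolding K_def w_def using assms(1,2) disj by (simp add: sum.union_disjoint sum.reindex)
  moreover have "\<forall>i\<in>I. 0 \<le> c (Inl i)" "\<forall>j\<in>J. 0 \<le> c (Inr j)" using c(1) unfolding K_def by auto
  ultimately show ?thesis
    using c(2,3) by (intro exI[of _ "\<lambda>i. c (Inl i)"] exI[of _ "\<lambda>j. c (Inr j)"]) simp
qed

lemma convex_combination_ne_zero_if_inner_neg:
  fixes v :: "'b \<Rightarrow> 'a::real_inner"
  assumes "finite A" and "\<forall>i\<in>A. 0 \<le> c i" and "sum c A = 1" and "\<forall>i\<in>A. v i \<bullet> z < 0"
  shows "(\<Sum>i\<in>A. c i *\<^sub>R v i) \<noteq> 0"
proof
  assume "(\<Sum>i\<in>A. c i *\<^sub>R v i) = 0"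
  then have "(\<Sum>i\<in>A. c i * (v i \<bullet> z)) = 0"
    by (metis (no_types, lifting) inner_sum_left inner_scaleR_left inner_zero_left sum.cong)
  moreover obtain k where "k \<in> A" "c k > 0"
  proof -
    have "\<not> (\<forall>i\<in>A. c i \<le> 0)" using assms(3) sum_nonpos[of A c] by auto
    then show thesis using that by (auto simp: not_le)
  qed
  then have "(\<Sum>i\<in>A. c i * (v i \<bullet> z)) < (\<Sum>i\<in>A. 0)"
    using assms(1,2,4) by (intro sum_strict_mono_ex1) (auto intro: mult_nonneg_nonpos less_imp_le mult_pos_neg)
  ultimately show False by simp
qed

lemma zero_in_convex_hull_gradients_if_QP_solution_zero:
  assumes "m \<ge> 1" and sol: "QP_solution m gf p g gg x t 0"
  shows "0 \<in> convex hull ((\<lambda>j. gf j x) ` {1..m} \<union> (\<lambda>i. gg i x) ` actI p g x)"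
proof (rule ccontr)
  let ?W = "(\<lambda>j. gf j x) ` {1..m} \<union> (\<lambda>i. gg i x) ` actI p g x"
  assume "0 \<notin> convex hull ?W"
  moreover have "finite ?W" using finite_actI[of p g x] by simp
  ultimately obtain a where a: "\<forall>v\<in>?W. v \<bullet> a < 0"
    using exists_neg_inner_if_zero_notin_convex_hull by blast
  have "\<forall>i\<in>actI p g x. gg i x \<bullet> a < 0" and "Phi p g x = 0 \<longrightarrow> (\<forall>j\<in>{1..m}. gf j x \<bullet> a < 0)"
    using a by simp_all
  then show False by (rule QP_solution_zero_no_descent_direction[OF \<open>m \<ge> 1\<close> sol])
qed

lemma strongly_critical_if_QP_solution_zero:
  assumes "m \<ge> 1" and sol: "QP_solution m gf p g gg x t 0" and mfcq: "MFCQ p g gg x"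
  shows "strongly_critical m gf p g gg x"
proof -
  let ?A = "actI p g x"
  obtain z where z: "\<forall>i\<in>?A. gg i x \<bullet> z < 0" using mfcq unfolding MFCQ_def by blast
  have P0: "Phi p g x = 0" by (rule Phi_eq_0_if_QP_solution_zero_MFCQ[OF assms])
  obtain lam c where lam: "\<forall>j\<in>{1..m}. 0 \<le> lam j" and c: "\<forall>i\<in>?A. 0 \<le> c i"
    and sum_1: "sum lam {1..m} + sum c ?A = 1"
    and vsum_0: "(\<Sum>j\<in>{1..m}. lam j *\<^sub>R gf j x) + (\<Sum>i\<in>?A. c i *\<^sub>R gg i x) = 0"
    using convex_hull_Un_image_weights[OF finite_atLeastAtMost finite_actI
        zero_in_convex_hull_gradients_if_QP_solution_zero[OF \<open>m \<ge> 1\<close> sol]]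
    by blast
  define mu where "mu i = (if i \<in> ?A then c i else 0)" for i
  have vsum_mu: "(\<Sum>i\<in>{1..p}. mu i *\<^sub>R gg i x) = (\<Sum>i\<in>?A. c i *\<^sub>R gg i x)"
  proof -
    have "(\<Sum>i\<in>{1..p}. mu i *\<^sub>R gg i x) = (\<Sum>i\<in>{1..p}. if i \<in> ?A then c i *\<^sub>R gg i x else 0)"
      unfolding mu_def by (rule sum.cong) auto
    also have "\<dots> = (\<Sum>i\<in>{1..p} \<inter> ?A. c i *\<^sub>R gg i x)"
      by (rule sum.inter_restrict[symmetric]) simp
    also have "{1..p} \<inter> ?A = ?A" by (auto simp: actI_iff)
    finally show ?thesis .
  qed
  \<comment> \<open>If all objective weights vanished, the active gradients would violate MFCQ.\<close>
  have "\<exists>j\<in>{1..m}. lam j \<noteq> 0"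
  proof (rule ccontr)
    assume "\<not> (\<exists>j\<in>{1..m}. lam j \<noteq> 0)"
    then have "sum c ?A = 1" and "(\<Sum>i\<in>?A. c i *\<^sub>R gg i x) = 0"
      using sum_1 vsum_0 by simp_all
    then show False
      using convex_combination_ne_zero_if_inner_neg[OF finite_actI c _ z] by blast
  qed
  moreover have "\<forall>i\<in>{1..p}. mu i \<ge> 0" using c unfolding mu_def by auto
  moreover have "(\<Sum>j\<in>{1..m}. lam j *\<^sub>R gf j x) + (\<Sum>i\<in>{1..p}. mu i *\<^sub>R gg i x) = 0"
    using vsum_0 vsum_mu by simp
  moreover have "\<forall>i\<in>{1..p}. mu i * g i x = 0"
    unfolding mu_def using P0 by (auto simp: actI_iff)
  moreover have "x \<in> feasible_set p g"
    unfolding feasible_set_def using Phi_ge[of _ p g x] P0 by auto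
  ultimately show ?thesis unfolding strongly_critical_def using lam
    by (intro conjI exI[of _ lam] exI[of _ mu]) assumption+
qed

lemma eventually_increment_less_at_right_0:
  fixes F :: "'a::real_inner \<Rightarrow> real"
  assumes "(F has_derivative (\<lambda>h. G \<bullet> h)) (at x)" and "0 < \<eta>"
  shows "\<forall>\<^sub>F a in at_right 0. F (x + a *\<^sub>R d) - F x < a * (G \<bullet> d + \<eta>)"
proof -
  have ray: "((\<lambda>a::real. x + a *\<^sub>R d) has_derivative (\<lambda>h. h *\<^sub>R d)) (at 0)"
    by (auto intro!: derivative_eq_intros)
  have "((\<lambda>a. F (x + a *\<^sub>R d)) has_derivative (\<lambda>h. G \<bullet> (h *\<^sub>R d))) (at 0)"
    using has_derivative_compose[OF ray, of F "\<lambda>h. G \<bullet> h"] assms(1) by simp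
  moreover have "(\<lambda>h. G \<bullet> (h *\<^sub>R d)) = (*) (G \<bullet> d)" by (auto simp: fun_eq_iff)
  ultimately have "((\<lambda>a. F (x + a *\<^sub>R d)) has_field_derivative (G \<bullet> d)) (at 0)"
    by (simp add: has_field_derivative_def)
  then have "((\<lambda>a. (F (x + a *\<^sub>R d) - F x) / a) \<longlongrightarrow> G \<bullet> d) (at_right 0)"
    by (auto simp: has_field_derivative_iff intro: tendsto_mono[OF at_le, rotated])
  then have "\<forall>\<^sub>F a in at_right 0. (F (x + a *\<^sub>R d) - F x) / a < G \<bullet> d + \<eta>"
    using order_tendstoD(2) assms(2) by fastforce
  with eventually_pos_at_right_0 show ?thesis
    by eventually_elim (simp add: pos_divide_less_eq mult.commute)
qed

lemma constraint_along_direction_le: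
  fixes g :: "nat \<Rightarrow> real^'n \<Rightarrow> real"
  assumes "i \<in> {1..p}" and g_diff: "(g i has_derivative (\<lambda>h. gg i x \<bullet> h)) (at x)" and "0 < \<epsilon>"
  shows "\<forall>\<^sub>F a in at_right 0.
    g i (x + a *\<^sub>R d) \<le> Phi p g x + a * Phi_star p g gg x d + a * \<epsilon>"
proof (cases "g i x = Phi p g x")
  case True
  then have "i \<in> actI p g x" using \<open>i \<in> {1..p}\<close> by (simp add: actI_iff)
  then have slope: "gg i x \<bullet> d \<le> Phi_star p g gg x d" using Phi_add_Phi_star_ge True by fastforce
  have "\<forall>\<^sub>F a in at_right 0. g i (x + a *\<^sub>R d) - g i x < a * (gg i x \<bullet> d + \<epsilon>)"
    using g_diff \<open>0 < \<epsilon>\<close> by (rule eventually_increment_less_at_right_0)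
  with eventually_pos_at_right_0 show ?thesis
  proof eventually_elim
    case (elim a)
    have "a * (gg i x \<bullet> d) \<le> a * Phi_star p g gg x d" using elim(1) slope by (simp add: mult_left_mono)
    then show ?case using elim(2) True by (simp add: distrib_left)
  qed
next
  case False
  then have "g i x < Phi p g x" using Phi_ge[OF \<open>i \<in> {1..p}\<close>, of g x] by simp
  have "isCont (g i) x" using g_diff has_derivative_continuous by blast
  moreover have "((\<lambda>a::real. x + a *\<^sub>R d) \<longlongrightarrow> x) (at_right 0)"
    by (auto intro!: tendsto_eq_intros)
  ultimately have "((\<lambda>a. g i (x + a *\<^sub>R d) - (Phi p g x + a * Phi_star p g gg x d + a * \<epsilon>))
      \<longlongrightarrow> g i x - (Phi p g x + 0 * Phi_star p g gg x d + 0 * \<epsilon>)) (at_right 0)"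
    by (intro tendsto_intros isCont_tendsto_compose[of x "g i"])
  then have "\<forall>\<^sub>F a in at_right 0.
      g i (x + a *\<^sub>R d) - (Phi p g x + a * Phi_star p g gg x d + a * \<epsilon>) < 0"
    by (rule order_tendstoD(2)) (use \<open>g i x < Phi p g x\<close> in simp)
  then show ?thesis by eventually_elim simp
qed

lemma Phi_along_direction_le:
  fixes g :: "nat \<Rightarrow> real^'n \<Rightarrow> real"
  assumes g_diff: "\<forall>i\<in>{1..p}. (g i has_derivative (\<lambda>h. gg i x \<bullet> h)) (at x)" and "0 < \<epsilon>"
  shows "\<forall>\<^sub>F a in at_right 0.
    Phi p g (x + a *\<^sub>R d) \<le> Phi p g x + a * Phi_star p g gg x d + a * \<epsilon>"
proof -
  let ?P = "Phi p g x" and ?S = "Phi_star p g gg x d"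
  have "\<forall>\<^sub>F a in at_right 0. \<forall>i\<in>{1..p}. g i (x + a *\<^sub>R d) \<le> ?P + a * ?S + a * \<epsilon>"
    using g_diff \<open>0 < \<epsilon>\<close> by (intro eventually_ball_finite ballI constraint_along_direction_le) auto
  moreover have "\<forall>\<^sub>F a in at_right (0::real). a < 1"
    by (rule order_tendstoD(2)[OF tendsto_ident_at]) simp
  ultimately show ?thesis using eventually_pos_at_right_0
  proof eventually_elim
    case (elim a)
    have "0 \<le> (1 - a) * ?P" using elim(2) Phi_nonneg[of p g x] by simp
    moreover have "0 \<le> a * (?P + ?S)" using elim(3) Phi_add_Phi_star_nonneg[of p g x gg d] by simp
    moreover have "0 \<le> a * \<epsilon>" using elim(3) \<open>0 < \<epsilon>\<close> by simp
    ultimately have "0 \<le> ?P + a * ?S + a * \<epsilon>" by (simp add: algebra_simps)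
    then show ?case using elim(1) by (intro Phi_le) auto
  qed
qed

lemma Psi_along_direction_less:
  fixes fj :: "real^'n \<Rightarrow> real"
  assumes f_diff: "(fj has_derivative (\<lambda>h. gfj x \<bullet> h)) (at x)"
    and g_diff: "\<forall>i\<in>{1..p}. (g i has_derivative (\<lambda>h. gg i x \<bullet> h)) (at x)"
    and "0 < \<sigma>" and "theta gfj p g gg \<sigma> x d < 0"
  shows "\<forall>\<^sub>F a in at_right 0. Psi fj p g \<sigma> (x + a *\<^sub>R d) < Psi fj p g \<sigma> x"
proof -
  let ?P = "Phi p g x" and ?S = "Phi_star p g gg x d"
  define e where "e = - theta gfj p g gg \<sigma> x d"
  have "0 < e" using assms(4) unfolding e_def by simp
  have theta_eq: "gfj x \<bullet> d + \<sigma> * ?S = - e" unfolding e_def theta_def by simp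
  have "\<forall>\<^sub>F a in at_right 0. fj (x + a *\<^sub>R d) - fj x < a * (gfj x \<bullet> d + e / 4)"
    using f_diff \<open>0 < e\<close> by (intro eventually_increment_less_at_right_0) auto
  moreover have "\<forall>\<^sub>F a in at_right 0.
      Phi p g (x + a *\<^sub>R d) \<le> ?P + a * ?S + a * (e / (4 * \<sigma>))"
    using g_diff \<open>0 < e\<close> \<open>0 < \<sigma>\<close> by (intro Phi_along_direction_le) auto
  ultimately show ?thesis using eventually_pos_at_right_0
  proof eventually_elim
    case (elim a)
    have "\<sigma> * Phi p g (x + a *\<^sub>R d) \<le> \<sigma> * (?P + a * ?S + a * (e / (4 * \<sigma>)))"
      using elim(2) \<open>0 < \<sigma>\<close> by (simp add: mult_left_mono)
    also have "\<dots> = \<sigma> * ?P + a * (\<sigma> * ?S) + a * e / 4" using \<open>0 < \<sigma>\<close> by (simp add: field_simps)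
    finally have "\<sigma> * Phi p g (x + a *\<^sub>R d) \<le> \<sigma> * ?P + a * (\<sigma> * ?S) + a * e / 4" .
    moreover have "a * (gfj x \<bullet> d) + a * (\<sigma> * ?S) = - (a * e)"
      using arg_cong[OF theta_eq, of "(*) a"] by (simp add: distrib_left)
    moreover have "0 < a * e" using elim(3) \<open>0 < e\<close> by simp
    ultimately show ?case using elim(1) unfolding Psi_def by (simp add: algebra_simps)
  qed
qed

lemma theta_le_QP_feasible:
  assumes "QP_feasible m gf p g gg x t d" and "j \<in> {1..m}" and "0 \<le> \<sigma>"
  shows "theta (gf j) p g gg \<sigma> x d \<le> t + \<sigma> * (max 0 t - Phi p g x)"
proof -
  have "Phi_star p g gg x d \<le> max 0 t - Phi p g x"
  proof (rule Phi_star_le)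
    fix i assume "i \<in> actI p g x"
    then show "g i x + gg i x \<bullet> d \<le> max 0 t"
      using assms(1) unfolding QP_feasible_def actI_iff by force
  qed simp
  then have "\<sigma> * Phi_star p g gg x d \<le> \<sigma> * (max 0 t - Phi p g x)"
    using assms(3) by (rule mult_left_mono)
  moreover have "gf j x \<bullet> d \<le> t" using assms(1,2) unfolding QP_feasible_def by auto
  ultimately show ?thesis unfolding theta_def by simp
qed

lemma theta_neg_QP_solution:
  assumes sol: "QP_solution m gf p g gg x t d" and "d \<noteq> 0" and "j \<in> {1..m}"
    and \<sigma>: "2 * \<bar>t\<bar> / (d \<bullet> d) + 1 \<le> \<sigma>"
  shows "theta (gf j) p g gg \<sigma> x d < 0"
proof -
  let ?P = "Phi p g x"
  have dd: "0 < d \<bullet> d" using \<open>d \<noteq> 0\<close> by simp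
  then have "0 \<le> 2 * \<bar>t\<bar> / (d \<bullet> d)" by simp
  then have "0 < \<sigma>" using \<sigma> by linarith
  have theta_le: "theta (gf j) p g gg \<sigma> x d \<le> t + \<sigma> * (max 0 t - ?P)"
    using sol \<open>j \<in> {1..m}\<close> \<open>0 < \<sigma>\<close> unfolding QP_solution_def
    by (intro theta_le_QP_feasible) auto
  show ?thesis
  proof (cases "t < 0")
    case True
    then have "\<sigma> * (max 0 t - ?P) \<le> 0"
      using \<open>0 < \<sigma>\<close> Phi_nonneg[of p g x] by (simp add: mult_nonneg_nonpos)
    then show ?thesis using theta_le True by simp
  next
    case False
    \<comment> \<open>Now (I) gives max 0 t - \<Phi>(x) \<le> - d\<bullet>d/2, and \<sigma> d\<bullet>d/2 > t by the choice of \<sigma>.\<close>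
    have "\<sigma> * (max 0 t - ?P) \<le> \<sigma> * (- (d \<bullet> d) / 2)"
      using False QP_solution_le_Phi[OF sol] \<open>0 < \<sigma>\<close> by (intro mult_left_mono) auto
    moreover have "(2 * t / (d \<bullet> d) + 1) * (d \<bullet> d) \<le> \<sigma> * (d \<bullet> d)"
      using \<sigma> False dd by (intro mult_right_mono) auto
    then have "2 * t + d \<bullet> d \<le> \<sigma> * (d \<bullet> d)" using dd by (simp add: field_simps)
    ultimately show ?thesis using theta_le by (simp add: algebra_simps) (use dd in linarith)
  qed
qed

lemma QP_solution_descent_direction:
  assumes f_diff: "\<forall>j\<in>{1..m}. (f j has_derivative (\<lambda>h. gf j x \<bullet> h)) (at x)"
    and g_diff: "\<forall>i\<in>{1..p}. (g i has_derivative (\<lambda>h. gg i x \<bullet> h)) (at x)"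
    and sol: "QP_solution m gf p g gg x t d" and "d \<noteq> 0"
  shows "\<exists>\<sigma>b>0. \<forall>\<sigma>\<ge>\<sigma>b. \<forall>j\<in>{1..m}.
           theta (gf j) p g gg \<sigma> x d < 0 \<and>
           (\<exists>\<alpha>b>0. \<forall>\<alpha>\<in>{0<..\<alpha>b}. Psi (f j) p g \<sigma> (x + \<alpha> *\<^sub>R d) < Psi (f j) p g \<sigma> x)"
proof (rule exI[of _ "2 * \<bar>t\<bar> / (d \<bullet> d) + 1"], intro conjI allI impI ballI)
  let ?\<sigma>b = "2 * \<bar>t\<bar> / (d \<bullet> d) + 1"
  show "0 < ?\<sigma>b" by (simp add: add_nonneg_pos)
  fix \<sigma> j assume "?\<sigma>b \<le> \<sigma>" and j: "j \<in> {1..m}"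
  then show neg: "theta (gf j) p g gg \<sigma> x d < 0"
    using theta_neg_QP_solution[OF sol \<open>d \<noteq> 0\<close>] by blast
  have "0 < \<sigma>" using \<open>?\<sigma>b \<le> \<sigma>\<close> \<open>0 < ?\<sigma>b\<close> by linarith
  show "\<exists>\<alpha>b>0. \<forall>\<alpha>\<in>{0<..\<alpha>b}. Psi (f j) p g \<sigma> (x + \<alpha> *\<^sub>R d) < Psi (f j) p g \<sigma> x"
    using f_diff j g_diff \<open>0 < \<sigma>\<close> neg
    by (intro eventually_at_right_0_imp_interval Psi_along_direction_less) auto
qed

theorem mainTheorem2:
  fixes m p :: nat
    and f g :: "nat \<Rightarrow> real^'n \<Rightarrow> real"
    and gf gg :: "nat \<Rightarrow> real^'n \<Rightarrow> real^'n"
    and x d :: "real^'n" and t :: real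
  assumes m_pos: "m \<ge> 1"
    and f_C1: "\<forall>j\<in>{1..m}. (\<forall>y. (f j has_derivative (\<lambda>h. gf j y \<bullet> h)) (at y)) \<and> continuous_on UNIV (gf j)"
    and g_C1: "\<forall>i\<in>{1..p}. (\<forall>y. (g i has_derivative (\<lambda>h. gg i y \<bullet> h)) (at y)) \<and> continuous_on UNIV (gg i)"
    and sol: "QP_solution m gf p g gg x t d"
  shows "t \<le> Phi p g x - (1/2) * (d \<bullet> d)
    \<and> (d = 0 \<and> MFCQ p g gg x \<longrightarrow> strongly_critical m gf p g gg x)
    \<and> (d \<noteq> 0 \<longrightarrow> (\<exists>\<sigma>b>0. \<forall>\<sigma>\<ge>\<sigma>b. \<forall>j\<in>{1..m}.
           theta (gf j) p g gg \<sigma> x d < 0 \<and>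
           (\<exists>\<alpha>b>0. \<forall>\<alpha>\<in>{0<..\<alpha>b}. Psi (f j) p g \<sigma> (x + \<alpha> *\<^sub>R d) < Psi (f j) p g \<sigma> x)))"
proof (intro conjI impI)
  show "t \<le> Phi p g x - (1/2) * (d \<bullet> d)" using QP_solution_le_Phi[OF sol] by simp
  show "strongly_critical m gf p g gg x" if "d = 0 \<and> MFCQ p g gg x"
    using strongly_critical_if_QP_solution_zero[OF m_pos] sol that by blast
  show "\<exists>\<sigma>b>0. \<forall>\<sigma>\<ge>\<sigma>b. \<forall>j\<in>{1..m}. theta (gf j) p g gg \<sigma> x d < 0 \<and>
      (\<exists>\<alpha>b>0. \<forall>\<alpha>\<in>{0<..\<alpha>b}. Psi (f j) p g \<sigma> (x + \<alpha> *\<^sub>R d) < Psi (f j) p g \<sigma> x)"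
    if "d \<noteq> 0"
    using f_C1 g_C1 by (intro QP_solution_descent_direction[OF _ _ sol that]) auto
qed

end
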